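(* Let $L\ge 3$, and let $G=(V,E)$, $B$ and the plaquettes be those of the planar surface code defined below. Let $D\subseteq V\setminus B$ be arbitrary (of any parity). Then $G$ has a minimum-size $D$-join $J$ relative to $B$ such that every vertex of $D$ has $J$-degree exactly $1$. More specifically, if $J$ is any minimum-size $D$-join of $G$ relative to $B$, then there is a set $P$ of plaquettes such that $J' = J\oplus\bigoplus_{f\in P}\partial f$ satisfies $|J'|=|J|$ and every vertex of $D$ has $J'$-degree exactly $1$.
   Context: Vertex set: $V=\{0,1,\dots,L\}\times\{0,1,\dots,L-1\}$. Edge set: $E$ consists of all horizontal edges $\{(x,y),(x+1,y)\}$ with $0\le x\le L-1$, together with the vertical edges $\{(x,y),(x,y+1)\}$ with $1\le x\le L-1$ and $0\le y\le L-2$. Equivalently, these are the unit grid edges except the vertical edges on the two sides $x=0$ and $x=L$. Boundary vertices: $B=\{(x,y)\in V: x\in\{0,L\}\}$. Plaquettes: for $0\le x\le L-1$ and $0\le y\le L-2$, the plaquette $f_{x,y}$ is the unit square with corners $(x,y),(x+1,y),(x,y+1),(x+1,y+1)$. Its relative boundary $\partial f_{x,y}$ is the set of its four sides that belong to $E$. The symbol $\oplus$ denotes symmetric difference. For $J\subseteq E$, the $J$-degree of a vertex is the number of edges of $J$ incident to it. For disjoint $B,D\subseteq V$, a $D$-join relative to $B$ is a set $J\subseteq E$ such that every vertex of $D$ has odd $J$-degree and every vertex of $V\setminus(D\cup B)$ has even $J$-degree; vertices of $B$ are unconstrained. This is the $[[2L^2-2L+1,1,L]]$ planar surface code: qubits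 are the edges in $E$, $X$-checks are the vertices in $V\setminus B$ (support = incident edges), and $Z$-checks are the plaquettes (support = relative boundary). Its dual lattice is isomorphic to this one. *)

theory Defs
  imports Main
begin

type_synonym vtx = "nat \<times> nat"
type_synonym edge = "vtx set"

definition sc_V :: "nat \<Rightarrow> vtx set" where
  "sc_V L = {(x, y). x \<le> L \<and> y < L}"

definition sc_E :: "nat \<Rightarrow> edge set" where
  "sc_E L =
     {{(x, y), (x + 1, y)} | x y. x < L \<and> y < L} \<union>
     {{(x, y), (x, y + 1)} | x y. 1 \<le> x \<and> x + 1 \<le> L \<and> y + 2 \<le> L}"

definition sc_B :: "nat \<Rightarrow> vtx set" where
  "sc_B L = {(x, y) \<in> sc_V L. x = 0 \<or> x = L}"

definition sc_F :: "nat \<Rightarrow> (nat \<times> nat) set" where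
  "sc_F L = {(x, y). x < L \<and> y + 2 \<le> L}"

definition sc_pbd :: "nat \<Rightarrow> nat \<times> nat \<Rightarrow> edge set" where
  "sc_pbd L f = (case f of (x, y) \<Rightarrow>
     {{(x, y), (x + 1, y)}, {(x, y + 1), (x + 1, y + 1)},
      {(x, y), (x, y + 1)}, {(x + 1, y), (x + 1, y + 1)}} \<inter> sc_E L)"

text \<open>Symmetric difference, and its iterate over a (finite) family of plaquettes:
  an edge lies in the iterated symmetric difference iff it lies in an odd
  number of the boundaries.\<close>
definition symdiff :: "'a set \<Rightarrow> 'a set \<Rightarrow> 'a set" (infixl "\<oplus>" 65) where
  "A \<oplus> C = (A - C) \<union> (C - A)"

definition sc_pbd_sum :: "nat \<Rightarrow> (nat \<times> nat) set \<Rightarrow> edge set" where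
  "sc_pbd_sum L P = {e. odd (card {f \<in> P. e \<in> sc_pbd L f})}"

definition jdeg :: "edge set \<Rightarrow> vtx \<Rightarrow> nat" where
  "jdeg J v = card {e \<in> J. v \<in> e}"

definition is_Djoin :: "nat \<Rightarrow> vtx set \<Rightarrow> edge set \<Rightarrow> bool" where
  "is_Djoin L D J \<longleftrightarrow> J \<subseteq> sc_E L \<and>
     (\<forall>v \<in> D. odd (jdeg J v)) \<and>
     (\<forall>v \<in> sc_V L - (D \<union> sc_B L). even (jdeg J v))"

definition is_min_Djoin :: "nat \<Rightarrow> vtx set \<Rightarrow> edge set \<Rightarrow> bool" where
  "is_min_Djoin L D J \<longleftrightarrow> is_Djoin L D J \<and>
     (\<forall>J'. is_Djoin L D J' \<longrightarrow> card J \<le> card J')"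

end

theory Submission
  imports Defs
begin

text \<open>
  Fix a minimum D-join J. The joins K = J \<oplus> \<partial>P with |K| = |J| are again minimum D-joins;
  among them choose K with the fewest defects, i.e. vertices of D of K-degree 3 (rather than 1).
  Suppose c is a defect. Two of its edges span a plaquette f, and minimality of |K| forces the
  other two sides of f to avoid K, so flipping f keeps |K|, repairs c and raises the degree of
  the opposite corner z by two. By the choice of K, z must become a new defect, and its three
  edges span a plaquette adjacent to f whose two sides at z lie in the new join. Iterating gives
  an infinite walk of plaquettes in a finite grid. Following it from a topmost plaquette to its
  first repetition, the walk returns to that plaquette at the same corner; but the top side of
  the plaquette was flipped exactly once in between, whereas its membership in the join is
  determined by the corner at which the walk stands.
\<close>

section \<open>Symmetric differences and incidence\<close>

lemma mem_symdiff [simp]: "x \<in> A \<oplus> B \<longleftrightarrow> (x \<in> A) \<noteq> (x \<in> B)"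
  unfolding symdiff_def by auto

lemma symdiff_assoc: "(A \<oplus> B) \<oplus> C = A \<oplus> (B \<oplus> C)"
  by auto

lemma symdiff_empty [simp]: "A \<oplus> {} = A"
  by auto

lemma finite_symdiff [simp]: "finite A \<Longrightarrow> finite B \<Longrightarrow> finite (A \<oplus> B)"
  unfolding symdiff_def by simp

lemma card_symdiff:
  assumes "finite A" "finite B"
  shows "card (A \<oplus> B) + 2 * card (A \<inter> B) = card A + card B"
proof -
  have "card (A \<oplus> B) = card (A - B) + card (B - A)"
    unfolding symdiff_def using assms by (auto intro: card_Un_disjoint)
  moreover have "card A = card (A \<inter> B) + card (A - B)" "card B = card (A \<inter> B) + card (B - A)"
    using card_Int_Diff[OF assms(1), of B] card_Int_Diff[OF assms(2), of A]
    by (simp_all add: Int_commute)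
  ultimately show ?thesis
    by simp
qed

lemma odd_card_symdiff:
  assumes "finite A" "finite B"
  shows "odd (card (A \<oplus> B)) \<longleftrightarrow> odd (card A) \<noteq> odd (card B)"
  using card_symdiff[OF assms] by (metis even_add even_mult_iff even_numeral)

lemma mem_iterated_symdiff:
  assumes step: "\<And>t. Js (Suc t) = Js t \<oplus> X t" and "a \<le> b"
  shows "e \<in> Js b \<longleftrightarrow> (e \<in> Js a) \<noteq> odd (card {t \<in> {a..<b}. e \<in> X t})"
  using assms(2)
proof (induction b rule: dec_induct)
  case base
  then show ?case
    by simp
next
  case (step b)
  have "{t \<in> {a..<Suc b}. e \<in> X t} = {t \<in> {a..<b}. e \<in> X t} \<union> (if e \<in> X b then {b} else {})"
    using step.hyps(1) by (auto simp: less_Suc_eq)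
  then have "card {t \<in> {a..<Suc b}. e \<in> X t} = card {t \<in> {a..<b}. e \<in> X t} + (if e \<in> X b then 1 else 0)"
    by simp
  then show ?case
    using step.IH assms(1)[of b] by auto
qed

lemma ex_first_repeat:
  fixes f :: "nat \<Rightarrow> 'a" and k :: nat
  assumes "finite (range f)"
  obtains j where "k < j" "inj_on f {k..<j}" "f j \<in> f ` {k..<j}"
proof -
  have "\<not> inj_on f {k..k + card (range f)}"
    using card_inj_on_le[of f "{k..k + card (range f)}" "range f"] assms by auto
  then have ex: "\<exists>j. \<not> inj_on f {k..j}"
    by blast
  define j where "j = (LEAST j. \<not> inj_on f {k..j})"
  have not_inj: "\<not> inj_on f {k..j}"
    unfolding j_def using LeastI_ex[OF ex] .
  have "k < j"
    using not_inj by (cases "j \<le> k") (auto simp: le_less)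
  moreover have "inj_on f {k..<j}"
  proof -
    have "inj_on f {k..j - 1}"
      using not_less_Least[of "j - 1" "\<lambda>j. \<not> inj_on f {k..j}"] \<open>k < j\<close> unfolding j_def by auto
    moreover have "{k..j - 1} = {k..<j}"
      using \<open>k < j\<close> by auto
    ultimately show ?thesis
      by simp
  qed
  moreover have "{k..j} = insert j {k..<j}"
    using \<open>k < j\<close> by auto
  ultimately show thesis
    using that not_inj by auto
qed

definition incident :: "edge set \<Rightarrow> vtx \<Rightarrow> edge set" where
  "incident S v = {e \<in> S. v \<in> e}"

lemma jdeg_eq_card_incident: "jdeg J v = card (incident J v)"
  unfolding jdeg_def incident_def ..

lemma incident_symdiff: "incident (A \<oplus> B) v = incident A v \<oplus> incident B v"
  unfolding incident_def by auto

lemma incident_Int: "incident (A \<inter> B) v = incident A v \<inter> incident B v"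
  unfolding incident_def by auto

lemma finite_incident [simp]: "finite A \<Longrightarrow> finite (incident A v)"
  unfolding incident_def by simp

lemma jdeg_symdiff:
  assumes "finite A" "finite B"
  shows "jdeg (A \<oplus> B) v + 2 * jdeg (A \<inter> B) v = jdeg A v + jdeg B v"
  unfolding jdeg_eq_card_incident incident_symdiff incident_Int
  using card_symdiff[of "incident A v" "incident B v"] assms by simp

section \<open>Grid edges\<close>

definition hedge :: "vtx \<Rightarrow> edge" where
  "hedge p = {p, (fst p + 1, snd p)}"

definition vedge :: "vtx \<Rightarrow> edge" where
  "vedge p = {p, (fst p, snd p + 1)}"

lemma hedge_neq_vedge [simp]: "hedge p \<noteq> vedge q" "vedge q \<noteq> hedge p"
  unfolding hedge_def vedge_def by (cases p; cases q; auto simp: doubleton_eq_iff)+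

lemma hedge_eq_iff [simp]: "hedge p = hedge q \<longleftrightarrow> p = q"
  unfolding hedge_def by (cases p; cases q) (auto simp: doubleton_eq_iff)

lemma vedge_eq_iff [simp]: "vedge p = vedge q \<longleftrightarrow> p = q"
  unfolding vedge_def by (cases p; cases q) (auto simp: doubleton_eq_iff)

lemma mem_hedge: "v \<in> hedge p \<longleftrightarrow> v = p \<or> v = (fst p + 1, snd p)"
  unfolding hedge_def by auto

lemma mem_vedge: "v \<in> vedge p \<longleftrightarrow> v = p \<or> v = (fst p, snd p + 1)"
  unfolding vedge_def by auto

lemma sc_E_eq:
  "sc_E L = {hedge (x, y) | x y. x < L \<and> y < L} \<union>
            {vedge (x, y) | x y. 1 \<le> x \<and> x + 1 \<le> L \<and> y + 2 \<le> L}"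
  unfolding sc_E_def hedge_def vedge_def by auto

lemma hedge_in_sc_E: "hedge p \<in> sc_E L \<longleftrightarrow> fst p < L \<and> snd p < L"
  unfolding sc_E_eq by (cases p) auto

lemma vedge_in_sc_E: "vedge p \<in> sc_E L \<longleftrightarrow> 1 \<le> fst p \<and> fst p + 1 \<le> L \<and> snd p + 2 \<le> L"
  unfolding sc_E_eq by (cases p) auto

lemma sc_E_cases:
  assumes "e \<in> sc_E L"
  obtains p where "e = hedge p" | p where "e = vedge p"
  using assms unfolding sc_E_eq by blast

lemma finite_sc_E: "finite (sc_E L)"
proof -
  have "sc_E L \<subseteq> hedge ` ({..L} \<times> {..L}) \<union> vedge ` ({..L} \<times> {..L})"
    unfolding sc_E_eq by auto
  then show ?thesis
    by (rule finite_subset) auto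
qed

lemma finite_sc_V: "finite (sc_V L)"
  unfolding sc_V_def by (rule finite_subset[of _ "{..L} \<times> {..<L}"]) auto

lemma finite_sc_F: "finite (sc_F L)"
  unfolding sc_F_def by (rule finite_subset[of _ "{..<L} \<times> {..<L}"]) auto

lemma incident_sc_E_subset:
  "incident (sc_E L) (x, y) \<subseteq> {hedge (x, y), hedge (x - 1, y), vedge (x, y), vedge (x, y - 1)}"
  by (auto simp: incident_def mem_hedge mem_vedge elim!: sc_E_cases)

lemma jdeg_le_4:
  assumes "J \<subseteq> sc_E L"
  shows "jdeg J v \<le> 4"
proof -
  obtain x y where v: "v = (x, y)"
    by fastforce
  have "incident J v \<subseteq> {hedge (x, y), hedge (x - 1, y), vedge (x, y), vedge (x, y - 1)}"
    using assms incident_sc_E_subset[of L x y] unfolding v incident_def by blast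
  then have "jdeg J v \<le> card {hedge (x, y), hedge (x - 1, y), vedge (x, y), vedge (x, y - 1)}"
    unfolding jdeg_eq_card_incident by (rule card_mono[rotated]) simp
  also have "\<dots> \<le> 4"
    by (simp add: card_insert_if)
  finally show ?thesis .
qed

section \<open>Plaquettes\<close>

definition plaq_sides :: "nat \<times> nat \<Rightarrow> edge set" where
  "plaq_sides f = {hedge f, hedge (fst f, snd f + 1), vedge f, vedge (fst f + 1, snd f)}"

definition plaq_corners :: "nat \<times> nat \<Rightarrow> vtx set" where
  "plaq_corners f = {f, (fst f + 1, snd f), (fst f, snd f + 1), (fst f + 1, snd f + 1)}"

text \<open>The point reflection of a corner of f through the centre of f.\<close>

definition opp_corner :: "nat \<times> nat \<Rightarrow> vtx \<Rightarrow> vtx" where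
  "opp_corner f c = (2 * fst f + 1 - fst c, 2 * snd f + 1 - snd c)"

lemma sc_pbd_eq: "sc_pbd L f = plaq_sides f \<inter> sc_E L"
  unfolding sc_pbd_def plaq_sides_def hedge_def vedge_def by (cases f) auto

lemma finite_plaq_sides [simp]: "finite (plaq_sides f)"
  unfolding plaq_sides_def by simp

lemma card_plaq_sides: "card (plaq_sides f) = 4"
  unfolding plaq_sides_def by (cases f) auto

lemma incident_plaq_sides_corner:
  "c \<in> plaq_corners f \<Longrightarrow> incident (plaq_sides f) c = {hedge (fst f, snd c), vedge (fst c, snd f)}"
  unfolding incident_def plaq_sides_def plaq_corners_def
  by (cases f; cases c) (auto simp: mem_hedge mem_vedge)

lemma card_incident_plaq_sides_corner: "c \<in> plaq_corners f \<Longrightarrow> card (incident (plaq_sides f) c) = 2"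
  by (simp add: incident_plaq_sides_corner)

lemma incident_plaq_sides_not_corner:
  "u \<notin> plaq_corners f \<Longrightarrow> incident (plaq_sides f) u = {}"
  unfolding incident_def plaq_sides_def plaq_corners_def
  by (cases f; cases u) (auto simp: mem_hedge mem_vedge)

lemma opp_corner_in_corners: "c \<in> plaq_corners f \<Longrightarrow> opp_corner f c \<in> plaq_corners f"
  unfolding plaq_corners_def opp_corner_def by (cases f) auto

lemma side_mem_iff_opp_corner:
  "c \<in> plaq_corners f \<Longrightarrow> e \<in> plaq_sides f \<Longrightarrow> c \<in> e \<longleftrightarrow> opp_corner f c \<notin> e"
  unfolding plaq_corners_def plaq_sides_def opp_corner_def
  by (cases f; cases c) (auto simp: mem_hedge mem_vedge)

lemma opp_corner_parity:
  "c \<in> plaq_corners f \<Longrightarrow> even (fst (opp_corner f c) + snd (opp_corner f c)) \<longleftrightarrow> even (fst c + snd c)"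
  unfolding plaq_corners_def opp_corner_def by (cases f) auto

lemma corners_same_parity:
  assumes "c \<in> plaq_corners f" "u \<in> plaq_corners f"
    and "even (fst u + snd u) \<longleftrightarrow> even (fst c + snd c)"
  shows "u = c \<or> u = opp_corner f c"
  using assms unfolding plaq_corners_def opp_corner_def by (cases f) auto

lemma card_sides_at_adjacent_corner:
  assumes "c \<in> plaq_corners f" "u \<in> plaq_corners f" "u \<noteq> c" "u \<noteq> opp_corner f c"
  shows "card (incident (incident (plaq_sides f) c) u) = 1"
proof -
  have "incident (incident (plaq_sides f) c) u =
        (if snd u = snd c then {hedge (fst f, snd c)} else {vedge (fst c, snd f)})"
    using assms unfolding incident_plaq_sides_corner[OF assms(1)]
    unfolding incident_def plaq_corners_def opp_corner_def
    by (cases f) (auto simp: mem_hedge mem_vedge)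
  then show ?thesis
    by simp
qed

lemma hedge_in_plaq_sides:
  "hedge p \<in> plaq_sides f \<longleftrightarrow> f = p \<or> (1 \<le> snd p \<and> f = (fst p, snd p - 1))"
  unfolding plaq_sides_def by (cases p; cases f) (auto simp: prod_eq_iff)

lemma vedge_in_plaq_sides:
  "vedge p \<in> plaq_sides f \<longleftrightarrow> f = p \<or> (1 \<le> fst p \<and> f = (fst p - 1, snd p))"
  unfolding plaq_sides_def by (cases p; cases f) (auto simp: prod_eq_iff)

lemma side_in_two_plaqs:
  assumes "e \<in> plaq_sides f" "e \<in> plaq_sides g" "e \<in> plaq_sides h" "f \<noteq> g"
  shows "h = f \<or> h = g"
proof -
  have "(\<exists>p. e = hedge p) \<or> (\<exists>p. e = vedge p)"
    using assms(1) unfolding plaq_sides_def by blast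
  then show ?thesis
    using assms by (auto simp: hedge_in_plaq_sides vedge_in_plaq_sides)
qed

lemma top_side_in_plaq_sides:
  "hedge (fst f, snd f + 1) \<in> plaq_sides g \<longleftrightarrow> g = f \<or> g = (fst f, snd f + 1)"
  by (auto simp: hedge_in_plaq_sides)

lemma plaq_spanned_at_corner:
  assumes h: "hedge p \<in> incident (sc_E L) v" and w: "vedge q \<in> incident (sc_E L) v"
  shows "(fst p, snd q) \<in> sc_F L" "v \<in> plaq_corners (fst p, snd q)"
    "incident (plaq_sides (fst p, snd q)) v = {hedge p, vedge q}"
proof -
  have v: "snd v = snd p" "fst v = fst p \<or> fst v = fst p + 1"
    "fst v = fst q" "snd v = snd q \<or> snd v = snd q + 1"
    using h w by (auto simp: incident_def mem_hedge mem_vedge)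
  show "(fst p, snd q) \<in> sc_F L"
    using h w by (simp add: incident_def hedge_in_sc_E vedge_in_sc_E sc_F_def)
  show corner: "v \<in> plaq_corners (fst p, snd q)"
    using v by (cases v) (auto simp: plaq_corners_def)
  show "incident (plaq_sides (fst p, snd q)) v = {hedge p, vedge q}"
    using v by (simp add: incident_plaq_sides_corner[OF corner])
qed

lemma plaq_at_degree_3_vertex:
  assumes J: "J \<subseteq> sc_E L" and deg: "jdeg J v = 3"
  obtains f where "f \<in> sc_F L" "v \<in> plaq_corners f" "incident (plaq_sides f) v \<subseteq> J"
proof -
  obtain x y where v: "v = (x, y)"
    by fastforce
  let ?H = "{hedge (x, y), hedge (x - 1, y)}" and ?W = "{vedge (x, y), vedge (x, y - 1)}"
  have sub: "incident J v \<subseteq> ?H \<union> ?W"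
    using J incident_sc_E_subset[of L x y] unfolding v incident_def by blast
  have not_sub: "\<not> incident J v \<subseteq> S" if "finite S" "card S \<le> 2" for S
    using card_mono[OF that(1), of "incident J v"] that(2) deg
    unfolding jdeg_eq_card_incident by auto
  have "card ?H \<le> 2" "card ?W \<le> 2"
    by (auto simp: card_insert_if)
  then have "\<not> incident J v \<subseteq> ?W" "\<not> incident J v \<subseteq> ?H"
    using not_sub by auto
  then obtain p q where h: "hedge p \<in> incident J v" and w: "vedge q \<in> incident J v"
    using sub by blast
  have "hedge p \<in> incident (sc_E L) v" "vedge q \<in> incident (sc_E L) v"
    using h w J by (auto simp: incident_def)
  from plaq_spanned_at_corner[OF this] show ?thesis
    using h w that[of "(fst p, snd q)"] by (auto simp: incident_def)
qed

lemma next_plaq_at_degree_3_corner: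
  assumes J: "J \<subseteq> sc_E L" and z: "z \<in> plaq_corners f"
    and sides: "incident (plaq_sides f) z \<subseteq> J" and deg: "jdeg J z = 3"
  obtains g where "g \<in> sc_F L" "g \<noteq> f" "z \<in> plaq_corners g" "incident (plaq_sides g) z \<subseteq> J"
    "\<exists>e \<in> plaq_sides f \<inter> plaq_sides g. z \<in> e"
proof -
  let ?h = "hedge (fst f, snd z)" and ?v = "vedge (fst z, snd f)"
  have at_z: "incident (plaq_sides f) z = {?h, ?v}"
    using incident_plaq_sides_corner[OF z] .
  have "\<not> incident J z \<subseteq> {?h, ?v}"
    using card_mono[of "{?h, ?v}" "incident J z"] deg
    by (auto simp: jdeg_eq_card_incident card_insert_if)
  then obtain e where e: "e \<in> incident J z" "e \<notin> incident (plaq_sides f) z"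
    unfolding at_z by blast
  have hv: "?h \<in> incident (sc_E L) z" "?v \<in> incident (sc_E L) z"
    using sides J at_z unfolding incident_def by blast+
  have e_E: "e \<in> incident (sc_E L) z"
    using e J by (auto simp: incident_def)
  then have "e \<in> sc_E L"
    by (simp add: incident_def)
  then obtain g s where g: "g \<in> sc_F L" "z \<in> plaq_corners g"
    and s: "s \<in> incident (plaq_sides f) z" and at_z_g: "incident (plaq_sides g) z = {e, s}"
  proof (cases rule: sc_E_cases)
    case (1 p)
    with e_E have "hedge p \<in> incident (sc_E L) z"
      by simp
    from plaq_spanned_at_corner[OF this hv(2)] show thesis
      using that[of "(fst p, snd f)" ?v] unfolding 1 at_z by simp
  next
    case (2 q)
    with e_E have "vedge q \<in> incident (sc_E L) z"
      by simp
    from plaq_spanned_at_corner[OF hv(1) this] show thesis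
      using that[of "(fst f, snd q)" ?h] unfolding 2 at_z by (simp add: insert_commute)
  qed
  show thesis
  proof (rule that[OF g(1) _ g(2)])
    show "g \<noteq> f"
      using at_z_g e(2) by auto
    show "incident (plaq_sides g) z \<subseteq> J"
      using at_z_g e(1) s sides by (auto simp: incident_def)
    show "\<exists>e \<in> plaq_sides f \<inter> plaq_sides g. z \<in> e"
      using at_z_g s by (auto simp: incident_def)
  qed
qed

section \<open>Plaquette walks\<close>

text \<open>
  The grid geometry of one step of the defect-pushing process below: both sides of f at c lie
  in J, none at the opposite corner c', and f is flipped; c' lies on a side shared with the next
  plaquette f'.
\<close>

fun plaq_step :: "edge set \<times> vtx \<times> (nat \<times> nat) \<Rightarrow> edge set \<times> vtx \<times> (nat \<times> nat) \<Rightarrow> bool" where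
  "plaq_step (J, c, f) (J', c', f') \<longleftrightarrow>
     c \<in> plaq_corners f \<and> c' = opp_corner f c \<and> f' \<noteq> f \<and>
     (\<exists>e \<in> plaq_sides f \<inter> plaq_sides f'. c' \<in> e) \<and>
     incident (plaq_sides f) c \<subseteq> J \<and> incident (plaq_sides f) c' \<inter> J = {} \<and>
     J' = J \<oplus> plaq_sides f"

definition plaq_walk :: "(nat \<Rightarrow> nat \<times> nat) \<Rightarrow> (nat \<Rightarrow> vtx) \<Rightarrow> (nat \<Rightarrow> edge set) \<Rightarrow> bool" where
  "plaq_walk fs cs Js \<longleftrightarrow> (\<forall>t. plaq_step (Js t, cs t, fs t) (Js (Suc t), cs (Suc t), fs (Suc t)))"

lemma plaq_walkD:
  assumes "plaq_walk fs cs Js"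
  shows "cs t \<in> plaq_corners (fs t)" "cs (Suc t) = opp_corner (fs t) (cs t)" "fs (Suc t) \<noteq> fs t"
    "\<exists>e \<in> plaq_sides (fs t) \<inter> plaq_sides (fs (Suc t)). cs (Suc t) \<in> e"
    "incident (plaq_sides (fs t)) (cs t) \<subseteq> Js t"
    "incident (plaq_sides (fs t)) (cs (Suc t)) \<inter> Js t = {}"
    "Js (Suc t) = Js t \<oplus> plaq_sides (fs t)"
  using assms unfolding plaq_walk_def plaq_step.simps by blast+

lemma plaq_walk_side_mem:
  assumes walk: "plaq_walk fs cs Js" and e: "e \<in> plaq_sides (fs t)"
  shows "e \<in> Js t \<longleftrightarrow> cs t \<in> e"
proof
  assume "e \<in> Js t"
  then have "cs (Suc t) \<notin> e"
    using plaq_walkD(6)[OF walk, of t] e unfolding incident_def by blast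
  then show "cs t \<in> e"
    using side_mem_iff_opp_corner[OF plaq_walkD(1)[OF walk] e] plaq_walkD(2)[OF walk] by simp
next
  assume "cs t \<in> e"
  then show "e \<in> Js t"
    using plaq_walkD(5)[OF walk, of t] e unfolding incident_def by blast
qed

lemma plaq_walk_corner_parity:
  assumes walk: "plaq_walk fs cs Js"
  shows "even (fst (cs t) + snd (cs t)) \<longleftrightarrow> even (fst (cs 0) + snd (cs 0))"
proof (induction t)
  case 0
  then show ?case
    by simp
next
  case (Suc t)
  show ?case
    using Suc.IH opp_corner_parity[OF plaq_walkD(1)[OF walk, of t]]
    unfolding plaq_walkD(2)[OF walk] by blast
qed

lemma toggles_of_shared_side:
  assumes inj: "inj_on fs {a..<j}" and a: "Suc a < j" and neq: "fs (Suc a) \<noteq> fs a"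
    and e: "e \<in> plaq_sides (fs a)" "e \<in> plaq_sides (fs (Suc a))"
  shows "{t \<in> {a..<j}. e \<in> plaq_sides (fs t)} = {a, Suc a}"
proof -
  have "t \<in> {a, Suc a}" if t: "t \<in> {a..<j}" "e \<in> plaq_sides (fs t)" for t
  proof -
    have "fs t = fs a \<or> fs t = fs (Suc a)"
      using side_in_two_plaqs[OF e t(2)] neq by auto
    moreover have "a \<in> {a..<j}" "Suc a \<in> {a..<j}"
      using a by auto
    ultimately show ?thesis
      using inj_onD[OF inj _ t(1)] by blast
  qed
  then show ?thesis
    using a e by auto
qed

lemma plaq_walk_mem_iff_toggles:
  assumes "plaq_walk fs cs Js" "a \<le> b"
  shows "e \<in> Js b \<longleftrightarrow> (e \<in> Js a) \<noteq> odd (card {t \<in> {a..<b}. e \<in> plaq_sides (fs t)})"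
  using mem_iterated_symdiff[where X = "\<lambda>t. plaq_sides (fs t)"] plaq_walkD(7)[OF assms(1)] assms(2)
  by blast

lemma plaq_walk_no_return_to_shared_corner:
  assumes walk: "plaq_walk fs cs Js" and inj: "inj_on fs {a..<j}" and a: "Suc a < j"
    and return: "fs j \<in> {fs a, fs (Suc a)}"
  shows "cs j \<noteq> cs (Suc a)"
proof
  assume same: "cs j = cs (Suc a)"
  obtain e where e: "e \<in> plaq_sides (fs a)" "e \<in> plaq_sides (fs (Suc a))" "cs (Suc a) \<in> e"
    using plaq_walkD(4)[OF walk, of a] by blast
  have "e \<in> Js j"
    using plaq_walk_side_mem[OF walk, of e j] return e same by auto
  moreover have "e \<notin> Js a"
    using plaq_walk_side_mem[OF walk e(1)] e(3) plaq_walkD(2)[OF walk, of a]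
      side_mem_iff_opp_corner[OF plaq_walkD(1)[OF walk] e(1)] by simp
  moreover have "card {t \<in> {a..<j}. e \<in> plaq_sides (fs t)} = 2"
    using toggles_of_shared_side[OF inj a plaq_walkD(3)[OF walk] e(1,2)] by simp
  ultimately show False
    using plaq_walk_mem_iff_toggles[OF walk, of a j e] a by simp
qed

lemma plaq_walk_first_repeat:
  assumes walk: "plaq_walk fs cs Js" and inj: "inj_on fs {k..<j}" and repeat: "fs j \<in> fs ` {k..<j}"
  shows "fs j = fs k" "cs j = cs k"
proof -
  obtain i where i: "k \<le> i" "i < j" "fs j = fs i"
    using repeat by auto
  have inj_from: "inj_on fs {a..<j}" if "k \<le> a" for a
    using inj_on_subset[OF inj] that by auto
  have "Suc i < j"
    using i plaq_walkD(3)[OF walk, of i] by (metis Suc_lessI)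
  have "cs j = cs i \<or> cs j = opp_corner (fs i) (cs i)"
    using corners_same_parity[OF plaq_walkD(1)[OF walk, of i]] plaq_walkD(1)[OF walk, of j] i(3)
      plaq_walk_corner_parity[OF walk, of i] plaq_walk_corner_parity[OF walk, of j] by simp
  then have cs_j: "cs j = cs i"
    using plaq_walk_no_return_to_shared_corner[OF walk inj_from[OF i(1)] \<open>Suc i < j\<close>] i(3)
      plaq_walkD(2)[OF walk] by auto
  have "i = k"
  proof (rule ccontr)
    assume "i \<noteq> k"
    then obtain a where a: "i = Suc a" "k \<le> a"
      using i(1) by (metis le_eq_less_or_eq lessE)
    show False
      using plaq_walk_no_return_to_shared_corner[OF walk inj_from[OF a(2)]] a i cs_j by simp
  qed
  then show "fs j = fs k" "cs j = cs k"
    using i(3) cs_j by simp_all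
qed

lemma plaq_walk_infinite:
  assumes walk: "plaq_walk fs cs Js"
  shows "infinite (range fs)"
proof
  assume fin: "finite (range fs)"
  obtain k where top: "\<And>t. snd (fs t) \<le> snd (fs k)"
    using Max_in[of "snd ` range fs"] Max_ge[of "snd ` range fs"] fin by fastforce
  obtain j where j: "k < j" "inj_on fs {k..<j}" "fs j \<in> fs ` {k..<j}"
    using ex_first_repeat[OF fin] by blast
  note return = plaq_walk_first_repeat[OF walk j(2,3)]
  let ?top = "hedge (fst (fs k), snd (fs k) + 1)"
  have top_in: "?top \<in> plaq_sides (fs k)"
    using top_side_in_plaq_sides[of "fs k" "fs k"] by simp
  have "{t \<in> {k..<j}. ?top \<in> plaq_sides (fs t)} = {k}"
  proof -
    have "fs t = fs k" if "?top \<in> plaq_sides (fs t)" for t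
      using that top[of t] top_side_in_plaq_sides[of "fs k" "fs t"] by auto
    then show ?thesis
      using inj_onD[OF j(2)] j(1) top_in by auto
  qed
  then have "?top \<in> Js j \<longleftrightarrow> ?top \<notin> Js k"
    using plaq_walk_mem_iff_toggles[OF walk, of k j ?top] j(1) by simp
  then show False
    using plaq_walk_side_mem[OF walk, of ?top j] plaq_walk_side_mem[OF walk top_in] top_in return
    by simp
qed

section \<open>Plaquette flips of D-joins\<close>

lemma even_jdeg_sc_pbd:
  assumes f: "f \<in> sc_F L" and v: "v \<in> sc_V L - sc_B L"
  shows "even (jdeg (sc_pbd L f) v)"
proof (cases "v \<in> plaq_corners f")
  case True
  have "incident (plaq_sides f) v \<subseteq> sc_E L"
    using f v unfolding incident_plaq_sides_corner[OF True]
    by (auto simp: sc_F_def sc_V_def sc_B_def hedge_in_sc_E vedge_in_sc_E)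
  then have "incident (sc_pbd L f) v = incident (plaq_sides f) v"
    unfolding sc_pbd_eq incident_def by auto
  then show ?thesis
    by (simp add: jdeg_eq_card_incident incident_plaq_sides_corner[OF True])
next
  case False
  then have "incident (sc_pbd L f) v = {}"
    unfolding sc_pbd_eq incident_Int incident_plaq_sides_not_corner[OF False] by simp
  then show ?thesis
    by (simp add: jdeg_eq_card_incident)
qed

lemma is_Djoin_finite: "is_Djoin L D J \<Longrightarrow> finite J"
  unfolding is_Djoin_def using finite_sc_E finite_subset by blast

lemma is_Djoin_flip:
  assumes J: "is_Djoin L D J" and D: "D \<subseteq> sc_V L - sc_B L" and f: "f \<in> sc_F L"
  shows "is_Djoin L D (J \<oplus> sc_pbd L f)"
proof -
  have fin: "finite J" "finite (sc_pbd L f)"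
    using is_Djoin_finite[OF J] finite_sc_E by (auto simp: sc_pbd_eq)
  have "odd (jdeg (J \<oplus> sc_pbd L f) v) \<longleftrightarrow> odd (jdeg J v)" if "v \<in> sc_V L - sc_B L" for v
    using odd_card_symdiff[of "incident J v" "incident (sc_pbd L f) v"] fin
      even_jdeg_sc_pbd[OF f that]
    by (simp add: jdeg_eq_card_incident incident_symdiff)
  moreover have "J \<oplus> sc_pbd L f \<subseteq> sc_E L"
    using J unfolding is_Djoin_def symdiff_def sc_pbd_eq by blast
  ultimately show ?thesis
    using J D unfolding is_Djoin_def by blast
qed

lemma sc_pbd_sum_empty [simp]: "sc_pbd_sum L {} = {}"
  unfolding sc_pbd_sum_def by simp

lemma sc_pbd_sum_singleton [simp]: "sc_pbd_sum L {f} = sc_pbd L f"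
proof -
  have "{g \<in> {f}. e \<in> sc_pbd L g} = (if e \<in> sc_pbd L f then {f} else {})" for e
    by auto
  then show ?thesis
    unfolding sc_pbd_sum_def by auto
qed

lemma sc_pbd_sum_symdiff:
  assumes "finite P" "finite Q"
  shows "sc_pbd_sum L (P \<oplus> Q) = sc_pbd_sum L P \<oplus> sc_pbd_sum L Q"
proof -
  have "{f \<in> P \<oplus> Q. e \<in> sc_pbd L f} = {f \<in> P. e \<in> sc_pbd L f} \<oplus> {f \<in> Q. e \<in> sc_pbd L f}" for e
    by auto
  then have "odd (card {f \<in> P \<oplus> Q. e \<in> sc_pbd L f}) \<longleftrightarrow>
      odd (card {f \<in> P. e \<in> sc_pbd L f}) \<noteq> odd (card {f \<in> Q. e \<in> sc_pbd L f})" for e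
    using odd_card_symdiff[of "{f \<in> P. e \<in> sc_pbd L f}" "{f \<in> Q. e \<in> sc_pbd L f}"] assms
    by simp
  then show ?thesis
    unfolding sc_pbd_sum_def by (intro set_eqI) simp
qed

definition plaq_class :: "nat \<Rightarrow> edge set \<Rightarrow> edge set set" where
  "plaq_class L J = {J \<oplus> sc_pbd_sum L P | P. P \<subseteq> sc_F L}"

lemma plaq_class_refl: "J \<in> plaq_class L J"
  unfolding plaq_class_def by (auto intro!: exI[of _ "{}"])

lemma flip_in_plaq_class: "f \<in> sc_F L \<Longrightarrow> J \<oplus> sc_pbd L f \<in> plaq_class L J"
  unfolding plaq_class_def by (auto intro!: exI[of _ "{f}"])

lemma plaq_class_trans:
  assumes "K \<in> plaq_class L J" "K' \<in> plaq_class L K"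
  shows "K' \<in> plaq_class L J"
proof -
  obtain P Q where "P \<subseteq> sc_F L" "K = J \<oplus> sc_pbd_sum L P" "Q \<subseteq> sc_F L" "K' = K \<oplus> sc_pbd_sum L Q"
    using assms unfolding plaq_class_def by blast
  moreover have "finite P" "finite Q"
    using calculation finite_sc_F finite_subset by blast+
  ultimately have "P \<oplus> Q \<subseteq> sc_F L" "K' = J \<oplus> sc_pbd_sum L (P \<oplus> Q)"
    by (auto simp: sc_pbd_sum_symdiff symdiff_assoc)
  then show ?thesis
    unfolding plaq_class_def by blast
qed

lemma is_Djoin_plaq_class:
  assumes J: "is_Djoin L D J" and D: "D \<subseteq> sc_V L - sc_B L" and K: "K \<in> plaq_class L J"
  shows "is_Djoin L D K"
proof -
  obtain P where P: "P \<subseteq> sc_F L" "K = J \<oplus> sc_pbd_sum L P"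
    using K unfolding plaq_class_def by blast
  have "finite P"
    using P(1) finite_sc_F finite_subset by blast
  then have "is_Djoin L D (J \<oplus> sc_pbd_sum L P)"
    using P(1)
  proof (induction P rule: finite_induct)
    case empty
    then show ?case
      using J by simp
  next
    case (insert f P)
    have "insert f P = P \<oplus> {f}"
      using insert.hyps(2) by auto
    then have "J \<oplus> sc_pbd_sum L (insert f P) = (J \<oplus> sc_pbd_sum L P) \<oplus> sc_pbd L f"
      using insert.hyps(1) by (simp add: sc_pbd_sum_symdiff symdiff_assoc)
    then show ?case
      using is_Djoin_flip[OF _ D] insert by simp
  qed
  then show ?thesis
    using P(2) by simp
qed

lemma is_min_Djoin_plaq_class:
  assumes "is_min_Djoin L D J" "D \<subseteq> sc_V L - sc_B L" "K \<in> plaq_class L J" "card K = card J"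
  shows "is_min_Djoin L D K"
  using assms is_Djoin_plaq_class unfolding is_min_Djoin_def by metis

lemma min_Djoin_flip_at_corner:
  assumes min: "is_min_Djoin L D K" and D: "D \<subseteq> sc_V L - sc_B L"
    and f: "f \<in> sc_F L" and c: "c \<in> plaq_corners f" and at_c: "incident (plaq_sides f) c \<subseteq> K"
  shows "sc_pbd L f = plaq_sides f" "K \<inter> plaq_sides f = incident (plaq_sides f) c"
    "card (K \<oplus> plaq_sides f) = card K"
proof -
  let ?S = "sc_pbd L f" and ?A = "incident (plaq_sides f) c"
  have K: "finite K" "K \<subseteq> sc_E L"
    using min is_Djoin_finite unfolding is_min_Djoin_def is_Djoin_def by auto
  have le: "card K \<le> card (K \<oplus> ?S)"
    using min is_Djoin_flip[OF _ D f] unfolding is_min_Djoin_def by blast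
  have S: "?S \<subseteq> plaq_sides f" "finite ?S"
    by (auto simp: sc_pbd_eq)
  have card_S: "card ?S \<le> 4"
    using card_mono[OF finite_plaq_sides S(1)] card_plaq_sides[of f] by simp
  have A: "?A \<subseteq> K \<inter> ?S"
    using at_c K(2) by (auto simp: sc_pbd_eq incident_def)
  have card_A: "card ?A = 2"
    using card_incident_plaq_sides_corner[OF c] .
  have "2 \<le> card (K \<inter> ?S)"
    using card_mono[OF _ A] K(1) card_A by simp
  moreover have "card (K \<oplus> ?S) + 2 * card (K \<inter> ?S) = card K + card ?S"
    using card_symdiff[OF K(1) S(2)] .
  ultimately have card_KS: "card (K \<inter> ?S) = 2" "card ?S = 4" "card (K \<oplus> ?S) = card K"
    using le card_S by linarith+
  show S_eq: "?S = plaq_sides f"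
    using card_subset_eq[OF _ S(1)] card_KS(2) card_plaq_sides by simp
  show "K \<inter> plaq_sides f = ?A"
    using card_subset_eq[OF _ A] K(1) card_A card_KS(1) S_eq by simp
  show "card (K \<oplus> plaq_sides f) = card K"
    using card_KS(3) S_eq by simp
qed

lemma jdeg_flip_at_corner:
  assumes K: "finite K" and c: "c \<in> plaq_corners f"
    and KS: "K \<inter> plaq_sides f = incident (plaq_sides f) c"
  shows "jdeg (K \<oplus> plaq_sides f) c + 2 = jdeg K c"
    and "u \<noteq> c \<Longrightarrow> u \<noteq> opp_corner f c \<Longrightarrow> jdeg (K \<oplus> plaq_sides f) u = jdeg K u"
proof -
  have deg: "jdeg (K \<oplus> plaq_sides f) u + 2 * card (incident (incident (plaq_sides f) c) u)
      = jdeg K u + card (incident (plaq_sides f) u)" for u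
    using jdeg_symdiff[OF K finite_plaq_sides[of f], of u] KS by (simp add: jdeg_eq_card_incident)
  have "incident (incident (plaq_sides f) c) c = incident (plaq_sides f) c"
    unfolding incident_def by auto
  then show "jdeg (K \<oplus> plaq_sides f) c + 2 = jdeg K c"
    using deg[of c] card_incident_plaq_sides_corner[OF c] by simp
  assume u: "u \<noteq> c" "u \<noteq> opp_corner f c"
  show "jdeg (K \<oplus> plaq_sides f) u = jdeg K u"
  proof (cases "u \<in> plaq_corners f")
    case True
    then show ?thesis
      using deg[of u] card_sides_at_adjacent_corner[OF c True u] card_incident_plaq_sides_corner
      by simp
  next
    case False
    then have "incident (incident (plaq_sides f) c) u = {}"
      using incident_plaq_sides_not_corner[OF False] unfolding incident_def by blast
    then show ?thesis
      using deg[of u] incident_plaq_sides_not_corner[OF False] by simp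
  qed
qed

section \<open>Pushing defects\<close>

definition defects :: "vtx set \<Rightarrow> edge set \<Rightarrow> vtx set" where
  "defects D J = {v \<in> D. jdeg J v \<noteq> 1}"

lemma defects_flip_at_corner:
  assumes "finite K" "c \<in> plaq_corners f" "K \<inter> plaq_sides f = incident (plaq_sides f) c"
    and "jdeg K c = 3"
  shows "defects D (K \<oplus> plaq_sides f) \<subseteq> insert (opp_corner f c) (defects D K - {c})"
proof
  fix v
  assume v: "v \<in> defects D (K \<oplus> plaq_sides f)"
  have "v \<noteq> c"
    using v jdeg_flip_at_corner(1)[OF assms(1-3)] assms(4) by (auto simp: defects_def)
  then show "v \<in> insert (opp_corner f c) (defects D K - {c})"
    using v jdeg_flip_at_corner(2)[OF assms(1-3), of v] by (auto simp: defects_def)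
qed

lemma jdeg_defect:
  assumes "is_Djoin L D K" "v \<in> defects D K"
  shows "jdeg K v = 3"
proof -
  have "odd (jdeg K v)" "jdeg K v \<le> 4" "jdeg K v \<noteq> 1"
    using assms jdeg_le_4[of K L v] unfolding is_Djoin_def defects_def by auto
  then show ?thesis
    by presburger
qed

lemma finite_defects: "D \<subseteq> sc_V L - sc_B L \<Longrightarrow> finite (defects D K)"
  unfolding defects_def using finite_sc_V[of L] by (auto intro: finite_subset)

definition defect_at_corner :: "nat \<Rightarrow> vtx set \<Rightarrow> edge set \<Rightarrow> vtx \<Rightarrow> nat \<times> nat \<Rightarrow> bool" where
  "defect_at_corner L D K c f \<longleftrightarrow> c \<in> D \<and> jdeg K c = 3 \<and> f \<in> sc_F L \<and> c \<in> plaq_corners f \<and>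
     incident (plaq_sides f) c \<subseteq> K"

definition defect_minimal :: "nat \<Rightarrow> vtx set \<Rightarrow> edge set \<Rightarrow> bool" where
  "defect_minimal L D K \<longleftrightarrow>
     (\<forall>K' \<in> plaq_class L K. card K' = card K \<longrightarrow> card (defects D K) \<le> card (defects D K'))"

lemma card_subset_insert_Diff:
  assumes X: "finite X" "c \<in> X" and Y: "Y \<subseteq> insert z (X - {c})" and le: "card X \<le> card Y"
  shows "z \<in> Y" "card Y = card X"
proof -
  have fin: "finite (insert z (X - {c}))"
    using X(1) by simp
  have "card (insert z (X - {c})) \<le> Suc (card (X - {c}))"
    using X(1) by (simp add: card_insert_if)
  also have "\<dots> = card X"
    using card_Suc_Diff1[OF X] .
  finally show "card Y = card X"
    using card_mono[OF fin Y] le by simp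
  show "z \<in> Y"
  proof (rule ccontr)
    assume "z \<notin> Y"
    with Y have "Y \<subseteq> X - {c}"
      by blast
    then have "card Y < card X"
      using card_mono[of "X - {c}" Y] card_Suc_Diff1[OF X] X(1) by simp
    with le show False
      by simp
  qed
qed

lemma defect_minimal_plaq_class:
  assumes "defect_minimal L D K" "K' \<in> plaq_class L K" "card K' = card K"
    and "card (defects D K') = card (defects D K)"
  shows "defect_minimal L D K'"
  using assms plaq_class_trans[OF assms(2)] unfolding defect_minimal_def by simp

fun defect_config :: "nat \<Rightarrow> vtx set \<Rightarrow> edge set \<times> vtx \<times> (nat \<times> nat) \<Rightarrow> bool" where
  "defect_config L D (K, c, f) \<longleftrightarrow>
     is_min_Djoin L D K \<and> defect_minimal L D K \<and> defect_at_corner L D K c f"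

lemma defect_config_step:
  assumes D: "D \<subseteq> sc_V L - sc_B L" and config: "defect_config L D (K, c, f)"
  defines "K' \<equiv> K \<oplus> plaq_sides f" and "z \<equiv> opp_corner f c"
  shows "\<exists>g. plaq_step (K, c, f) (K', z, g) \<and> defect_config L D (K', z, g)"
proof -
  have min: "is_min_Djoin L D K" and dm: "defect_minimal L D K" and dc: "defect_at_corner L D K c f"
    using config by simp_all
  have c: "c \<in> D" "jdeg K c = 3" "f \<in> sc_F L" "c \<in> plaq_corners f"
    "incident (plaq_sides f) c \<subseteq> K"
    using dc unfolding defect_at_corner_def by auto
  note flip = min_Djoin_flip_at_corner[OF min D c(3-5)]
  have in_class: "K' \<in> plaq_class L K" and card_K': "card K' = card K"
    using flip_in_plaq_class[OF c(3), of K] flip unfolding K'_def by simp_all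
  have min': "is_min_Djoin L D K'"
    using is_min_Djoin_plaq_class[OF min D in_class card_K'] .
  have "finite K"
    using min is_Djoin_finite unfolding is_min_Djoin_def by blast
  then have "defects D K' \<subseteq> insert z (defects D K - {c})"
    using defects_flip_at_corner[OF _ c(4) flip(2) c(2)] unfolding K'_def z_def by blast
  moreover have "card (defects D K) \<le> card (defects D K')"
    using dm in_class card_K' unfolding defect_minimal_def by simp
  moreover have "c \<in> defects D K"
    using c(1,2) by (simp add: defects_def)
  ultimately have z: "z \<in> defects D K'" and card_eq: "card (defects D K') = card (defects D K)"
    using card_subset_insert_Diff[OF finite_defects[OF D]] by blast+
  have dm': "defect_minimal L D K'"
    using defect_minimal_plaq_class[OF dm in_class card_K' card_eq] .
  have Z: "incident (plaq_sides f) z \<inter> K = {}"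
    using flip(2) side_mem_iff_opp_corner[OF c(4)] unfolding z_def incident_def by blast
  have "jdeg K' z = 3"
    using jdeg_defect[OF _ z] min' unfolding is_min_Djoin_def by blast
  moreover have "incident (plaq_sides f) z \<subseteq> K'"
    using Z unfolding K'_def incident_def by auto
  moreover have "K' \<subseteq> sc_E L"
    using min' unfolding is_min_Djoin_def is_Djoin_def by blast
  moreover have "z \<in> plaq_corners f"
    using opp_corner_in_corners[OF c(4)] unfolding z_def .
  ultimately obtain g where "g \<in> sc_F L" "g \<noteq> f" "z \<in> plaq_corners g"
    "incident (plaq_sides g) z \<subseteq> K'" "\<exists>e \<in> plaq_sides f \<inter> plaq_sides g. z \<in> e"
    using next_plaq_at_degree_3_corner[of K' L z f] by blast
  with \<open>jdeg K' z = 3\<close> z Z c(4,5) min' dm'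
  show "\<exists>g. plaq_step (K, c, f) (K', z, g) \<and> defect_config L D (K', z, g)"
    unfolding defects_def K'_def z_def by (intro exI[of _ g]) (auto simp: defect_at_corner_def)
qed

lemma defect_minimal_no_defects:
  assumes min: "is_min_Djoin L D K" and D: "D \<subseteq> sc_V L - sc_B L" and dm: "defect_minimal L D K"
  shows "defects D K = {}"
proof (rule ccontr)
  assume "defects D K \<noteq> {}"
  then obtain v where v: "v \<in> defects D K"
    by blast
  have "K \<subseteq> sc_E L" "jdeg K v = 3"
    using min jdeg_defect[OF _ v] unfolding is_min_Djoin_def is_Djoin_def by auto
  then obtain f where "f \<in> sc_F L" "v \<in> plaq_corners f" "incident (plaq_sides f) v \<subseteq> K"
    by (rule plaq_at_degree_3_vertex)
  with v \<open>jdeg K v = 3\<close> have start: "defect_at_corner L D K v f"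
    unfolding defect_at_corner_def defects_def by blast
  have "\<exists>s'. defect_config L D s' \<and> plaq_step s s'" if "defect_config L D s" for s
    using that defect_config_step[OF D] by (cases s) blast
  moreover have "defect_config L D (K, v, f)"
    using min dm start by simp
  ultimately obtain st where st: "\<And>n. defect_config L D (st n)" "\<And>n. plaq_step (st n) (st (Suc n))"
    using dependent_nat_choice[of "\<lambda>_. defect_config L D" "\<lambda>_. plaq_step"] by blast
  define Js where "Js n = fst (st n)" for n
  define cs where "cs n = fst (snd (st n))" for n
  define fs where "fs n = snd (snd (st n))" for n
  have st_eq: "st n = (Js n, cs n, fs n)" for n
    unfolding Js_def cs_def fs_def by simp
  have "plaq_walk fs cs Js"
    using st(2) unfolding plaq_walk_def st_eq by blast
  moreover have "range fs \<subseteq> sc_F L"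
    using st(1) unfolding st_eq by (auto simp: defect_at_corner_def)
  ultimately show False
    using plaq_walk_infinite finite_sc_F finite_subset by blast
qed

lemma min_Djoin_class_defect_free:
  assumes min: "is_min_Djoin L D J" and D: "D \<subseteq> sc_V L - sc_B L"
  obtains K where "K \<in> plaq_class L J" "card K = card J" "defects D K = {}"
proof -
  let ?S = "{K \<in> plaq_class L J. card K = card J}"
  obtain K where K: "K \<in> ?S" and least: "\<And>K'. K' \<in> ?S \<Longrightarrow> card (defects D K) \<le> card (defects D K')"
    using ex_has_least_nat[of "\<lambda>K. K \<in> ?S" J "\<lambda>K. card (defects D K)"] plaq_class_refl by auto
  have "is_min_Djoin L D K"
    using is_min_Djoin_plaq_class[OF min D] K by blast
  moreover have "defect_minimal L D K"
    unfolding defect_minimal_def using least plaq_class_trans K by auto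
  ultimately have "defects D K = {}"
    using defect_minimal_no_defects[OF _ D] by blast
  then show thesis
    using that K by blast
qed

section \<open>Minimum D-joins exist\<close>

lemma Djoin_exists:
  assumes D: "D \<subseteq> sc_V L - sc_B L"
  obtains J where "is_Djoin L D J"
proof -
  define n where "n x y = card {x'. (x', y) \<in> D \<and> x < x'}" for x y
  \<comment> \<open>the mod-2 sum of the horizontal paths joining each vertex of D to the right boundary\<close>
  define J where "J = {hedge (x, y) | x y. x < L \<and> y < L \<and> odd (n x y)}"
  have n_pred: "n (x - 1) y = (if (x, y) \<in> D then Suc (n x y) else n x y)" if "1 \<le> x" for x y
  proof -
    have "{x'. (x', y) \<in> D \<and> x < x'} \<subseteq> {..L}"
      using D unfolding sc_V_def by auto
    then have "finite {x'. (x', y) \<in> D \<and> x < x'}"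
      by (rule finite_subset) simp
    moreover have "{x'. (x', y) \<in> D \<and> x - 1 < x'} =
        (if (x, y) \<in> D then insert x {x'. (x', y) \<in> D \<and> x < x'} else {x'. (x', y) \<in> D \<and> x < x'})"
      using that by (auto simp: less_diff_conv2 less_Suc_eq)
    ultimately show ?thesis
      unfolding n_def by simp
  qed
  have "odd (jdeg J (x, y)) \<longleftrightarrow> (x, y) \<in> D" if v: "(x, y) \<in> sc_V L - sc_B L" for x y
  proof -
    have x: "1 \<le> x" "x < L" "y < L"
      using v unfolding sc_V_def sc_B_def by auto
    have "incident J (x, y) = (\<lambda>i. hedge (i, y)) ` {i \<in> {x - 1, x}. odd (n i y)}"
      using x unfolding J_def incident_def by (auto simp: mem_hedge)
    then have "jdeg J (x, y) = card {i \<in> {x - 1, x}. odd (n i y)}"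
      unfolding jdeg_eq_card_incident by (simp add: card_image inj_on_def)
    moreover have "{i \<in> {x - 1, x}. odd (n i y)} =
        (if odd (n (x - 1) y) then {x - 1} else {}) \<union> (if odd (n x y) then {x} else {})"
      by auto
    then have "card {i \<in> {x - 1, x}. odd (n i y)} =
        (if odd (n (x - 1) y) then 1 else 0) + (if odd (n x y) then 1 else 0)"
      using x(1) by auto
    ultimately show ?thesis
      using n_pred[OF x(1)] by auto
  qed
  moreover have "J \<subseteq> sc_E L"
    unfolding J_def by (auto simp: hedge_in_sc_E)
  ultimately have "is_Djoin L D J"
    using D unfolding is_Djoin_def by auto
  then show thesis
    by (rule that)
qed

lemma min_Djoin_exists:
  assumes "D \<subseteq> sc_V L - sc_B L"
  obtains J where "is_min_Djoin L D J"
proof -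
  obtain J0 where "is_Djoin L D J0"
    using Djoin_exists[OF assms] .
  then obtain J where "is_Djoin L D J" "\<And>J'. is_Djoin L D J' \<Longrightarrow> card J \<le> card J'"
    using ex_has_least_nat[of "is_Djoin L D" J0 card] by blast
  then show thesis
    using that unfolding is_min_Djoin_def by blast
qed

theorem theorem3p2:
  fixes L :: nat and D :: "vtx set"
  assumes "L \<ge> 3"
    and "D \<subseteq> sc_V L - sc_B L"
  shows "(\<exists>J. is_min_Djoin L D J \<and> (\<forall>v \<in> D. jdeg J v = 1)) \<and>
         (\<forall>J. is_min_Djoin L D J \<longrightarrow>
            (\<exists>P \<subseteq> sc_F L.
               card (J \<oplus> sc_pbd_sum L P) = card J \<and>
               (\<forall>v \<in> D. jdeg (J \<oplus> sc_pbd_sum L P) v = 1)))"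
proof -
  \<comment> \<open>the argument works for every L\<close>
  have flip: "\<exists>P \<subseteq> sc_F L. card (J \<oplus> sc_pbd_sum L P) = card J \<and>
                (\<forall>v \<in> D. jdeg (J \<oplus> sc_pbd_sum L P) v = 1)"
    if min: "is_min_Djoin L D J" for J
  proof -
    obtain K where "K \<in> plaq_class L J" "card K = card J" "defects D K = {}"
      using min_Djoin_class_defect_free[OF min assms(2)] .
    then show ?thesis
      unfolding plaq_class_def defects_def by blast
  qed
  obtain J where J: "is_min_Djoin L D J"
    using min_Djoin_exists[OF assms(2)] .
  then obtain P where P: "P \<subseteq> sc_F L" "card (J \<oplus> sc_pbd_sum L P) = card J"
    "\<forall>v \<in> D. jdeg (J \<oplus> sc_pbd_sum L P) v = 1"
    using flip by blast
  have "is_min_Djoin L D (J \<oplus> sc_pbd_sum L P)"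
    using is_min_Djoin_plaq_class[OF J assms(2) _ P(2)] P(1) unfolding plaq_class_def by blast
  then show ?thesis
    using P(3) flip by blast
qed

end
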